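(* Let $c>1$, $\sigma=1-\frac1c$, and let $p,q\in[1,\infty)$ satisfy $(p-1)(q-1)=\sigma^2$. Then for every $\gamma\in[0,1]$ and every $m\ge1$, $$\Phi_r\!\left(\frac1m,\gamma\right)\ \ge\ \gamma^q\,m^{1+\frac qp-q}.$$
   Context: Work on $V=\{-1,1\}^d$ with the uniform probability measure $\mu$. For $x\in\{-1,1\}^d$, $N_\sigma(x)$ is the distribution of $y$ obtained by independently, for each coordinate $i$, setting $y_i=x_i$ with probability $\sigma$ and $y_i$ uniform in $\{-1,1\}$ otherwise. Let $e$ be the joint distribution of the pair $(x,y)$ with $x\sim\mu$ (data point) and $y\sim N_\sigma(x)$ (query); both marginals are $\mu$. The robust expansion is $$\Phi_r(\delta,\gamma)=\min_{A\subseteq V:\ 0<\mu(A)\le\delta}\ \ \min_{B\subseteq V:\ \Pr_{(x,y)\sim e}[x\in B\mid y\in A]\ge\gamma}\ \frac{\mu(B)}{\mu(A)}.$$ *)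

theory Defs
  imports Complex_Main "HOL-Library.Extended_Real"
begin

definition cube :: "nat \<Rightarrow> int list set" where
  "cube d = {x. length x = d \<and> set x \<subseteq> {-1, 1}}"

definition mu :: "nat \<Rightarrow> int list set \<Rightarrow> real" where
  "mu d A = real (card A) / 2 ^ d"

text \<open>Probability that N_sigma(x) outputs y: each coordinate kept with prob. sigma,
  otherwise resampled uniformly, so agreement has probability (1+sigma)/2.\<close>
definition noise :: "real \<Rightarrow> int list \<Rightarrow> int list \<Rightarrow> real" where
  "noise \<sigma> x y = (\<Prod>i<length x. if x ! i = y ! i then (1 + \<sigma>) / 2 else (1 - \<sigma>) / 2)"

definition joint :: "nat \<Rightarrow> real \<Rightarrow> int list \<Rightarrow> int list \<Rightarrow> real" where
  "joint d \<sigma> x y = noise \<sigma> x y / 2 ^ d"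

definition cond_prob :: "nat \<Rightarrow> real \<Rightarrow> int list set \<Rightarrow> int list set \<Rightarrow> real" where
  "cond_prob d \<sigma> B A = (\<Sum>x\<in>B. \<Sum>y\<in>A. joint d \<sigma> x y) / mu d A"

text \<open>Robust expansion; minimum over an empty family is +infinity.\<close>
definition Phi_r :: "nat \<Rightarrow> real \<Rightarrow> real \<Rightarrow> real \<Rightarrow> ereal" where
  "Phi_r d \<sigma> \<delta> \<gamma> = Inf {ereal (mu d B / mu d A) | A B.
      A \<subseteq> cube d \<and> 0 < mu d A \<and> mu d A \<le> \<delta> \<and>
      B \<subseteq> cube d \<and> cond_prob d \<sigma> B A \<ge> \<gamma>}"

end

theory Submission
  imports Defs "HOL-Analysis.Analysis"
begin

text \<open>
  The bound is the two-function hypercontractive inequality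
  \<open>\<E>[f(x) g(y)] \<le> \<parallel>f\<parallel>\<^sub>q \<parallel>g\<parallel>\<^sub>p\<close> for \<open>(p - 1)(q - 1) = \<sigma>\<^sup>2\<close>, applied to the indicators
  \<open>f = 1\<^sub>B\<close>, \<open>g = 1\<^sub>A\<close>: it gives \<open>\<gamma> \<mu>(A) \<le> \<mu>(B)\<^bsup>1/q\<^esup> \<mu>(A)\<^bsup>1/p\<^esup>\<close>, and since the
  resulting exponent of \<open>\<mu>(A)\<close> is nonpositive, \<open>\<mu>(A) \<le> 1/m\<close> yields the claim.
  The inequality tensorizes over the coordinates, so it suffices to prove it on \<open>{-1,1}\<close>.
  There, after normalizing the functions to \<open>1 + a\<epsilon>\<close> and \<open>1 + b\<epsilon>\<close>, it follows from
  H\<ouml>lder's inequality and the two-point estimate \<open>\<parallel>1 + \<rho>a\<epsilon>\<parallel>\<^sub>s \<le> \<parallel>1 + a\<epsilon>\<parallel>\<^sub>p\<close>,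
  \<open>\<rho> = \<surd>((p - 1)/(s - 1))\<close>, \<open>1 < p < s \<le> 2\<close>, which is proved by comparing the binomial
  series of both sides termwise.
\<close>

section \<open>Two-point hypercontractivity\<close>

lemma gbinomial_Suc_eq: "(a::real) gchoose (Suc n) = (a gchoose n) * (a - real n) / real (Suc n)"
proof -
  have "real (Suc n) * (a gchoose Suc n) = (a - real n) * (a gchoose n)"
    using gbinomial_absorption[of n a] gbinomial_absorb_comp[of a n] by simp
  then show ?thesis by (simp add: field_simps del: of_nat_Suc)
qed

lemma gbinomial_Suc_Suc_eq:
  "(a::real) gchoose (Suc (Suc n)) = (a gchoose n) * ((a - real n) * (a - real n - 1)) / ((real n + 1) * (real n + 2))"
  by (simp add: gbinomial_Suc_eq field_simps)

lemma scaled_gbinomial_even_bounds: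
  fixes p s r :: real
  assumes "1 < p" "p \<le> s" "s \<le> 2" "r = (p - 1) / (s - 1)"
  shows "0 \<le> (p/s) * (s gchoose (2*k+2)) * r^(k+1) \<and> (p/s) * (s gchoose (2*k+2)) * r^(k+1) \<le> p gchoose (2*k+2)"
proof (induction k)
  case 0
  have "(p/s) * (s gchoose 2) * r = p gchoose 2"
  proof -
    have p_eq: "p = 1 + r * s - r" using assms by (simp add: field_simps)
    have "s \<noteq> 0" using assms by simp
    then show ?thesis by (simp add: gbinomial_Suc_eq numeral_2_eq_2 field_simps) (simp add: p_eq algebra_simps)
  qed
  moreover have "0 \<le> p gchoose 2" using assms by (simp add: gbinomial_Suc_eq numeral_2_eq_2)
  ultimately show ?case by (simp add: numeral_2_eq_2)
next
  case (Suc k)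
  \<comment> \<open>from \<open>n\<close> to \<open>n + 2\<close> the left side is multiplied by \<open>\<alpha>\<close>, the right side by \<open>\<beta> \<ge> \<alpha> \<ge> 0\<close>\<close>
  define n where "n = 2*k+2"
  have n2: "real n \<ge> 2" unfolding n_def by simp
  have n_Suc: "2 * Suc k + 2 = Suc (Suc n)" unfolding n_def by simp
  define A where "A = (p/s) * (s gchoose n) * r^(k+1)"
  define B where "B = p gchoose n"
  have AB: "0 \<le> A" "A \<le> B" using Suc unfolding A_def B_def n_def by auto
  define \<alpha> where "\<alpha> = (s - real n) * (s - real n - 1) * r / ((real n + 1) * (real n + 2))"
  define \<beta> where "\<beta> = (p - real n) * (p - real n - 1) / ((real n + 1) * (real n + 2))"
  have r01: "0 \<le> r" "r \<le> 1" unfolding assms(4) using assms(1-3) by (auto intro: divide_nonneg_pos)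
  have s_factor_nonneg: "0 \<le> (s - real n) * (s - real n - 1)" using assms n2
    by (intro mult_nonpos_nonpos) auto
  have "(s - real n) * (s - real n - 1) * r \<le> (s - real n) * (s - real n - 1)"
    using s_factor_nonneg r01 by (simp add: mult_left_le)
  also have "\<dots> = (real n - s) * (real n + 1 - s)" by (simp add: algebra_simps)
  also have "\<dots> \<le> (real n - p) * (real n + 1 - p)"
    using assms n2 by (intro mult_mono) auto
  also have "\<dots> = (p - real n) * (p - real n - 1)" by (simp add: algebra_simps)
  finally have "(s - real n) * (s - real n - 1) * r \<le> (p - real n) * (p - real n - 1)" .
  then have \<alpha>: "0 \<le> \<alpha>" "\<alpha> \<le> \<beta>" unfolding \<alpha>_def \<beta>_def
    using mult_nonneg_nonneg[OF s_factor_nonneg r01(1)] by (auto intro: divide_right_mono)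
  have "(p/s) * (s gchoose (2 * Suc k + 2)) * r^(Suc k+1) = A * \<alpha>"
    unfolding n_Suc A_def \<alpha>_def gbinomial_Suc_Suc_eq by (simp add: field_simps)
  moreover have "p gchoose (2 * Suc k + 2) = B * \<beta>"
    unfolding n_Suc B_def \<beta>_def gbinomial_Suc_Suc_eq by (simp add: field_simps)
  ultimately show ?case using AB \<alpha> by (auto intro: mult_mono mult_nonneg_nonneg)
qed

text \<open>\<open>rademacher_moment r x\<close> is \<open>\<E>[(1 + x\<epsilon>)\<^sup>r]\<close> for a uniform sign \<open>\<epsilon>\<close>.\<close>

definition rademacher_moment :: "real \<Rightarrow> real \<Rightarrow> real" where
  "rademacher_moment r x = ((1 + x) powr r + (1 - x) powr r) / 2"

lemma rademacher_moment_nonneg: "0 \<le> rademacher_moment r x"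
  unfolding rademacher_moment_def by simp

lemma rademacher_moment_pos: "\<bar>x\<bar> < 1 \<Longrightarrow> 0 < rademacher_moment r x"
  unfolding rademacher_moment_def by (intro divide_pos_pos add_pos_pos) auto

lemma rademacher_moment_sums:
  assumes "\<bar>x\<bar> < 1"
  shows "(\<lambda>n. (r gchoose n) * x^n * ((1 + (-1)^n) / 2)) sums rademacher_moment r x"
proof -
  have "(\<lambda>n. (r gchoose n) * x^n) sums (1 + x) powr r"
    using assms by (rule gen_binomial_real)
  moreover have "(\<lambda>n. (r gchoose n) * (-x)^n) sums (1 + -x) powr r"
    using assms by (intro gen_binomial_real) simp
  ultimately have "(\<lambda>n. ((r gchoose n) * x^n + (r gchoose n) * (-x)^n) / 2)
      sums (((1 + x) powr r + (1 + -x) powr r) / 2)"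
    by (intro sums_divide sums_add)
  moreover have "((r gchoose n) * x^n + (r gchoose n) * (-x)^n) / 2 = (r gchoose n) * x^n * ((1 + (-1)^n) / 2)" for n
    by (simp add: power_minus' field_simps)
  ultimately show ?thesis unfolding rademacher_moment_def by simp
qed

lemma continuous_on_rademacher_moment:
  assumes "0 < r" "\<bar>c\<bar> \<le> 1"
  shows "continuous_on {-1..1} (\<lambda>a. rademacher_moment r (c * a))"
proof -
  have "\<forall>x\<in>{-1..1}. 0 \<le> 1 + c * x \<and> 0 \<le> 1 - c * x"
  proof
    fix x :: real assume "x \<in> {-1..1}"
    then have "\<bar>c * x\<bar> \<le> 1" using assms unfolding abs_mult by (intro mult_le_one) auto
    then show "0 \<le> 1 + c * x \<and> 0 \<le> 1 - c * x" by auto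
  qed
  then show ?thesis unfolding rademacher_moment_def using assms
    by (intro continuous_intros continuous_on_powr') auto
qed

lemma rademacher_series_coeff_le:
  fixes p s a :: real
  assumes "1 < p" "p \<le> s" "s \<le> 2"
  shows "(p/s) * ((s gchoose n) * (sqrt ((p - 1) / (s - 1)) * a)^n * ((1 + (-1)^n) / 2)) + (if n = 0 then 1 - p/s else 0)
    \<le> (p gchoose n) * a^n * ((1 + (-1)^n) / 2)"
proof -
  define r where "r = (p - 1) / (s - 1)"
  define \<rho> where "\<rho> = sqrt r"
  have "\<rho>^2 = r" using assms unfolding \<rho>_def r_def by simp
  consider "n = 0" | "odd n" | k where "n = 2*k+2"
  proof (cases "even n")
    case True
    then obtain m where m: "n = 2*m" by (rule evenE)
    show ?thesis
    proof (cases m)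
      case 0
      with m that(1) show ?thesis by simp
    next
      case (Suc k)
      with m that(3)[of k] show ?thesis by simp
    qed
  qed (use that in blast)
  then show ?thesis
  proof cases
    case 1
    then show ?thesis by simp
  next
    case 2
    then have "n \<noteq> 0" using odd_pos by blast
    with 2 show ?thesis by simp
  next
    case (3 k)
    have "n = 2*(k+1)" using 3 by simp
    then have "\<rho>^n = (\<rho>^2)^(k+1)" by (simp only: power_mult)
    then have "\<rho>^n = r^(k+1)" using \<open>\<rho>^2 = r\<close> by simp
    moreover have "0 \<le> a^n" using \<open>n = 2*(k+1)\<close> by (intro zero_le_even_power) simp
    moreover have "(p/s) * (s gchoose n) * r^(k+1) \<le> p gchoose n"
      using scaled_gbinomial_even_bounds[OF assms r_def, of k] 3 by simp
    ultimately have "(p/s) * (s gchoose n) * \<rho>^n * a^n \<le> (p gchoose n) * a^n"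
      by (metis mult_right_mono)
    then show ?thesis unfolding 3 r_def[symmetric] \<rho>_def[symmetric] by (simp add: power_mult_distrib mult_ac)
  qed
qed

lemma two_point_hypercontractive_interior:
  fixes p s a :: real
  assumes "1 < p" "p < s" "s \<le> 2" "\<bar>a\<bar> < 1"
  shows "rademacher_moment s (sqrt ((p - 1) / (s - 1)) * a) powr (p/s) \<le> rademacher_moment p a"
proof -
  define \<rho> where "\<rho> = sqrt ((p - 1) / (s - 1))"
  have "(p - 1) / (s - 1) < 1" using assms by (auto simp: field_simps)
  then have \<rho>: "0 \<le> \<rho>" "\<rho> < 1" using assms unfolding \<rho>_def by auto
  have "\<rho> * \<bar>a\<bar> \<le> \<rho>" using assms \<rho> by (intro mult_left_le) auto
  then have \<rho>a: "\<bar>\<rho> * a\<bar> < 1" using \<rho> by (simp add: abs_mult)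
  define X where "X = rademacher_moment s (\<rho> * a)"
  have "0 < X" unfolding X_def using \<rho>a by (rule rademacher_moment_pos)
  \<comment> \<open>weighted AM-GM reduces the claim to a linear inequality between two power series\<close>
  then have Young: "X powr (p/s) * 1 powr (1 - p/s) \<le> (p/s) * X + (1 - p/s) * 1"
    using assms by (intro Youngs_inequality_0) auto
  have lhs_sums: "(\<lambda>n. (p/s) * ((s gchoose n) * (\<rho> * a)^n * ((1 + (-1)^n) / 2)) + (if n = 0 then 1 - p/s else 0))
       sums ((p/s) * X + (1 - p/s))"
    unfolding X_def
    by (intro sums_add sums_mult rademacher_moment_sums \<rho>a) (rule sums_single[of 0 "\<lambda>_. 1 - p/s", simplified])
  have rhs_sums: "(\<lambda>n. (p gchoose n) * a^n * ((1 + (-1)^n) / 2)) sums rademacher_moment p a"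
    using assms by (intro rademacher_moment_sums) simp
  have "(p/s) * X + (1 - p/s) \<le> rademacher_moment p a"
    using rademacher_series_coeff_le[OF assms(1) less_imp_le[OF assms(2)] assms(3), folded \<rho>_def]
    by (rule sums_le[OF _ lhs_sums rhs_sums])
  with Young show ?thesis unfolding X_def \<rho>_def by simp
qed

lemma two_point_hypercontractive:
  fixes p s a :: real
  assumes "1 < p" "p < s" "s \<le> 2" "\<bar>a\<bar> \<le> 1"
  shows "rademacher_moment s (sqrt ((p - 1) / (s - 1)) * a) powr (1/s) \<le> rademacher_moment p a powr (1/p)"
proof -
  define \<rho> where "\<rho> = sqrt ((p - 1) / (s - 1))"
  have "(p - 1) / (s - 1) \<le> 1" using assms by (auto simp: field_simps)
  then have \<rho>: "0 \<le> \<rho>" "\<rho> \<le> 1" using assms unfolding \<rho>_def by auto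
  have "continuous_on {-1..1} (\<lambda>a. rademacher_moment p (1 * a))"
    using assms by (intro continuous_on_rademacher_moment) auto
  moreover have "continuous_on {-1..1} (\<lambda>a. rademacher_moment s (\<rho> * a) powr (p/s))"
  proof (rule continuous_on_powr')
    show "continuous_on {-1..1} (\<lambda>a. rademacher_moment s (\<rho> * a))"
      using assms \<rho> by (intro continuous_on_rademacher_moment) auto
  qed (use assms rademacher_moment_nonneg in auto)
  ultimately have "continuous_on (closure {-1<..<1})
      (\<lambda>a. rademacher_moment p (1 * a) - rademacher_moment s (\<rho> * a) powr (p/s))"
    by (simp add: continuous_on_diff)
  then have "0 \<le> rademacher_moment p (1 * a) - rademacher_moment s (\<rho> * a) powr (p/s)"
    by (rule continuous_ge_on_closure)
      (use assms two_point_hypercontractive_interior[of p s] in \<open>auto simp: \<rho>_def\<close>)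
  then have "(rademacher_moment s (\<rho> * a) powr (p/s)) powr (1/p) \<le> rademacher_moment p a powr (1/p)"
    using assms by (intro powr_mono2) auto
  then show ?thesis using assms unfolding \<rho>_def by (simp add: powr_powr)
qed

lemma two_point_Holder:
  fixes u1 u2 v1 v2 q r :: real
  assumes "q > 1" "r > 1" "1/q + 1/r = 1" "0 \<le> u1" "0 \<le> u2" "0 \<le> v1" "0 \<le> v2"
  shows "(u1 * v1 + u2 * v2) / 2 \<le> ((u1 powr q + u2 powr q) / 2) powr (1/q) * ((v1 powr r + v2 powr r) / 2) powr (1/r)"
proof -
  define U where "U = ((u1 powr q + u2 powr q) / 2) powr (1/q)"
  define V where "V = ((v1 powr r + v2 powr r) / 2) powr (1/r)"
  show ?thesis
  proof (cases "U = 0 \<or> V = 0")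
    case True
    then have "(u1 = 0 \<and> u2 = 0) \<or> (v1 = 0 \<and> v2 = 0)"
      unfolding U_def V_def using assms by (auto simp: add_nonneg_eq_0_iff)
    then show ?thesis using assms by (auto simp: U_def V_def)
  next
    case False
    then have "U > 0" "V > 0" unfolding U_def V_def by auto
    have U_powr: "u1 powr q + u2 powr q = 2 * U powr q" and V_powr: "v1 powr r + v2 powr r = 2 * V powr r"
      unfolding U_def V_def using assms by (simp_all add: powr_powr)
    have Young: "(u / U) * (v / V) \<le> (u powr q / U powr q) / q + (v powr r / V powr r) / r"
      if "0 \<le> u" "0 \<le> v" for u v
      using Youngs_inequality[OF assms(1-3), of "u/U" "v/V"] that \<open>U > 0\<close> \<open>V > 0\<close>
      by (simp add: powr_divide)
    have "(u1 * v1 + u2 * v2) / (U * V) = (u1/U)*(v1/V) + (u2/U)*(v2/V)"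
      by (simp add: add_divide_distrib)
    also have "\<dots> \<le> ((u1 powr q + u2 powr q) / U powr q) / q + ((v1 powr r + v2 powr r) / V powr r) / r"
      using Young[OF assms(4,6)] Young[OF assms(5,7)] by (simp add: add_divide_distrib)
    also have "\<dots> = 2 / q + 2 / r"
      using \<open>U > 0\<close> \<open>V > 0\<close> unfolding U_powr V_powr by simp
    also have "\<dots> = 2" using assms(3) by (simp add: field_simps)
    finally have "u1 * v1 + u2 * v2 \<le> 2 * (U * V)"
      using \<open>U > 0\<close> \<open>V > 0\<close> by (simp add: divide_le_eq)
    then show ?thesis unfolding U_def V_def by simp
  qed
qed

lemma noise_bound_normalized_ge_2:
  fixes p q \<sigma> a b :: real
  assumes "p > 1" "q \<ge> 2" "\<sigma> \<ge> 0" "\<sigma>^2 = (p-1)*(q-1)" "\<sigma> < 1" "\<bar>a\<bar> \<le> 1" "\<bar>b\<bar> \<le> 1"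
  shows "1 + \<sigma>*a*b \<le> rademacher_moment p a powr (1/p) * rademacher_moment q b powr (1/q)"
proof -
  \<comment> \<open>H\<ouml>lder moves the noise onto \<open>a\<close> at the dual exponent \<open>q'\<close>, which satisfies
    \<open>p < q' \<le> 2\<close> and \<open>\<sigma> = \<surd>((p - 1)/(q' - 1))\<close>\<close>
  define q' where "q' = q / (q - 1)"
  have q'_minus_1: "q' - 1 = 1 / (q - 1)" unfolding q'_def using assms by (simp add: field_simps)
  have "0 < 1 / (q - 1)" "1 / (q - 1) \<le> 1" using assms by simp_all
  then have "1 < q'" "q' \<le> 2" using q'_minus_1 by linarith+
  have dual: "1/q + 1/q' = 1" unfolding q'_def using assms by (simp add: field_simps)
  have "\<sigma>^2 < 1" using assms(3,5) by (simp add: abs_square_less_1)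
  then have "p - 1 < 1 / (q - 1)" using assms by (simp add: less_divide_eq)
  then have "p < q'" using q'_minus_1 by linarith
  have "(p - 1) / (q' - 1) = \<sigma>^2" unfolding q'_minus_1 using assms by simp
  then have \<sigma>_eq: "sqrt ((p - 1) / (q' - 1)) = \<sigma>" using assms(3) by simp
  have "\<bar>\<sigma> * a\<bar> \<le> 1" using assms unfolding abs_mult by (intro mult_le_one) auto
  have "1 + \<sigma>*a*b = ((1+b)*(1+\<sigma>*a) + (1-b)*(1-\<sigma>*a)) / 2" by (simp add: algebra_simps)
  also have "\<dots> \<le> rademacher_moment q b powr (1/q) * rademacher_moment q' (\<sigma> * a) powr (1/q')"
    unfolding rademacher_moment_def
    using assms \<open>\<bar>\<sigma> * a\<bar> \<le> 1\<close> \<open>1 < q'\<close> dual by (intro two_point_Holder) auto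
  also have "\<dots> \<le> rademacher_moment q b powr (1/q) * rademacher_moment p a powr (1/p)"
    using two_point_hypercontractive[OF assms(1) \<open>p < q'\<close> \<open>q' \<le> 2\<close> assms(6)] \<sigma>_eq
    by (intro mult_left_mono) auto
  finally show ?thesis by (simp add: mult.commute)
qed

lemma noise_bound_normalized:
  fixes p q \<sigma> a b :: real
  assumes "p > 1" "q > 1" "\<sigma> \<ge> 0" "\<sigma>^2 = (p-1)*(q-1)" "\<sigma> < 1" "\<bar>a\<bar> \<le> 1" "\<bar>b\<bar> \<le> 1"
  shows "1 + \<sigma>*a*b \<le> rademacher_moment p a powr (1/p) * rademacher_moment q b powr (1/q)"
proof -
  consider "q \<ge> 2" | "p \<ge> 2" | "p < 2" "q < 2" by linarith
  then show ?thesis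
  proof cases
    case 1
    then show ?thesis using noise_bound_normalized_ge_2 assms by blast
  next
    case 2
    then have "1 + \<sigma>*b*a \<le> rademacher_moment q b powr (1/q) * rademacher_moment p a powr (1/p)"
      using noise_bound_normalized_ge_2[of q p \<sigma> b a] assms by (simp add: mult.commute)
    then show ?thesis by (simp add: mult_ac)
  next
    case 3
    \<comment> \<open>both norms dominate the \<open>L\<^sup>2\<close> norms of \<open>1 + x\<epsilon>\<close> and \<open>1 + y\<epsilon>\<close>, where the bound is Cauchy-Schwarz\<close>
    define x where "x = sqrt (p - 1) * a"
    define y where "y = sqrt (q - 1) * b"
    have "sqrt (p - 1) * sqrt (q - 1) = \<sigma>"
      using assms by (simp add: real_sqrt_mult[symmetric] real_sqrt_unique)
    then have xy: "x * y = \<sigma> * a * b" unfolding x_def y_def by (simp add: mult_ac)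
    have "\<bar>x\<bar> \<le> 1" "\<bar>y\<bar> \<le> 1" unfolding x_def y_def abs_mult using assms 3
      by (intro mult_le_one; simp add: real_sqrt_le_1_iff)+
    have moment_2: "rademacher_moment 2 z = 1 + z^2" if "\<bar>z\<bar> \<le> 1" for z
      using that unfolding rademacher_moment_def by (simp add: power2_eq_square algebra_simps)
    have x_le: "sqrt (1 + x^2) \<le> rademacher_moment p a powr (1/p)"
      using two_point_hypercontractive[of p 2 a] assms 3 moment_2[OF \<open>\<bar>x\<bar> \<le> 1\<close>] unfolding x_def
      by (simp add: powr_half_sqrt)
    have y_le: "sqrt (1 + y^2) \<le> rademacher_moment q b powr (1/q)"
      using two_point_hypercontractive[of q 2 b] assms 3 moment_2[OF \<open>\<bar>y\<bar> \<le> 1\<close>] unfolding y_def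
      by (simp add: powr_half_sqrt)
    have "1 + x*y \<le> sqrt (1 + x^2) * sqrt (1 + y^2)"
    proof (cases "1 + x*y \<ge> 0")
      case True
      have "(1 + x*y)^2 \<le> (1 + x^2) * (1 + y^2)"
        using sum_squares_ge_zero[of "x - y" 0] by (simp add: power2_eq_square algebra_simps)
      then show ?thesis using True by (simp add: real_sqrt_mult[symmetric] real_le_rsqrt)
    next
      case False
      moreover have "0 \<le> sqrt (1 + x^2) * sqrt (1 + y^2)" by simp
      ultimately show ?thesis by linarith
    qed
    also have "\<dots> \<le> rademacher_moment p a powr (1/p) * rademacher_moment q b powr (1/q)"
      using x_le y_le by (intro mult_mono) auto
    finally show ?thesis using xy by simp
  qed
qed

lemma rademacher_moment_scale:
  fixes X a p :: real
  assumes "0 \<le> X" "\<bar>a\<bar> \<le> 1" "0 < p"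
  shows "(((X * (1 + a)) powr p + (X * (1 - a)) powr p) / 2) powr (1/p) = X * rademacher_moment p a powr (1/p)"
proof -
  have "(X * (1 + a)) powr p = X powr p * (1 + a) powr p" "(X * (1 - a)) powr p = X powr p * (1 - a) powr p"
    using assms by (auto intro: powr_mult)
  then have "((X * (1 + a)) powr p + (X * (1 - a)) powr p) / 2 = X powr p * rademacher_moment p a"
    unfolding rademacher_moment_def by (simp add: algebra_simps)
  then show ?thesis
    using assms by (simp add: powr_mult powr_powr rademacher_moment_nonneg)
qed

lemma nonneg_pair_as_scaled_signs:
  fixes x1 x2 :: real
  assumes "0 \<le> x1" "0 \<le> x2"
  obtains X a where "0 \<le> X" "\<bar>a\<bar> \<le> 1" "x1 = X * (1 + a)" "x2 = X * (1 - a)"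
proof (cases "x1 + x2 = 0")
  case True
  with assms that[of 0 0] show ?thesis by simp
next
  case False
  with assms that[of "(x1 + x2) / 2" "(x1 - x2) / (x1 + x2)"] show ?thesis
    by (simp add: abs_le_iff field_simps)
qed

lemma two_point_noise_bound:
  fixes p q \<sigma> x1 x2 y1 y2 :: real
  assumes "p > 1" "q > 1" "\<sigma> \<ge> 0" "\<sigma>^2 = (p-1)*(q-1)" "\<sigma> < 1"
    and "0 \<le> x1" "0 \<le> x2" "0 \<le> y1" "0 \<le> y2"
  shows "((1+\<sigma>)*(x1*y1+x2*y2) + (1-\<sigma>)*(x1*y2+x2*y1))/4
     \<le> ((x1 powr p + x2 powr p)/2) powr (1/p) * ((y1 powr q + y2 powr q)/2) powr (1/q)"
proof -
  obtain X a where X: "0 \<le> X" "\<bar>a\<bar> \<le> 1" "x1 = X * (1 + a)" "x2 = X * (1 - a)"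
    using nonneg_pair_as_scaled_signs assms(6,7) by blast
  obtain Y b where Y: "0 \<le> Y" "\<bar>b\<bar> \<le> 1" "y1 = Y * (1 + b)" "y2 = Y * (1 - b)"
    using nonneg_pair_as_scaled_signs assms(8,9) by blast
  have "((1+\<sigma>)*(x1*y1+x2*y2) + (1-\<sigma>)*(x1*y2+x2*y1))/4 = X * Y * (1 + \<sigma>*a*b)"
    unfolding X Y by (simp add: algebra_simps)
  also have "\<dots> \<le> X * Y * (rademacher_moment p a powr (1/p) * rademacher_moment q b powr (1/q))"
    using noise_bound_normalized[OF assms(1-5) X(2) Y(2)] X Y by (intro mult_left_mono) auto
  also have "\<dots> = ((x1 powr p + x2 powr p)/2) powr (1/p) * ((y1 powr q + y2 powr q)/2) powr (1/q)"
    unfolding X Y using X Y assms by (simp add: rademacher_moment_scale)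
  finally show ?thesis .
qed

section \<open>Tensorization over the cube\<close>

lemma cube_0: "cube 0 = {[]}" unfolding cube_def by auto

lemma finite_cube: "finite (cube d)"
proof -
  have "cube d = {xs. set xs \<subseteq> {-1,1} \<and> length xs = d}" unfolding cube_def by auto
  then show ?thesis by (simp add: finite_lists_length_eq)
qed

lemma cube_Suc: "cube (Suc d) = Cons 1 ` cube d \<union> Cons (-1) ` cube d"
  unfolding cube_def by (auto simp: length_Suc_conv)

lemma sum_cube_Suc: "sum F (cube (Suc d)) = sum (\<lambda>t. F (1 # t)) (cube d) + sum (\<lambda>t. F ((-1) # t)) (cube d)"
proof -
  have "sum F (cube (Suc d)) = sum F (Cons 1 ` cube d) + sum F (Cons (-1) ` cube d)"
    unfolding cube_Suc by (rule sum.union_disjoint) (auto simp: finite_cube)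
  also have "\<dots> = sum (\<lambda>t. F (1 # t)) (cube d) + sum (\<lambda>t. F ((-1) # t)) (cube d)"
    by (simp add: sum.reindex)
  finally show ?thesis .
qed

lemma joint_Cons:
  "joint (Suc d) \<sigma> (h # t) (h' # t') = (if h = h' then (1 + \<sigma>) / 2 else (1 - \<sigma>) / 2) * joint d \<sigma> t t' / 2"
proof -
  have "noise \<sigma> (h # t) (h' # t') = (if h = h' then (1 + \<sigma>) / 2 else (1 - \<sigma>) / 2) * noise \<sigma> t t'"
    unfolding noise_def by (simp only: length_Cons prod.lessThan_Suc_shift nth_Cons_0 nth_Cons_Suc)
  then show ?thesis unfolding joint_def by simp
qed

definition cube_norm :: "nat \<Rightarrow> real \<Rightarrow> (int list \<Rightarrow> real) \<Rightarrow> real" where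
  "cube_norm d p f = ((\<Sum>x\<in>cube d. f x powr p) / 2 ^ d) powr (1 / p)"

definition noise_form :: "nat \<Rightarrow> real \<Rightarrow> (int list \<Rightarrow> real) \<Rightarrow> (int list \<Rightarrow> real) \<Rightarrow> real" where
  "noise_form d \<sigma> f g = (\<Sum>x\<in>cube d. \<Sum>y\<in>cube d. f x * g y * joint d \<sigma> x y)"

lemma cube_norm_0: "0 < p \<Longrightarrow> 0 \<le> f [] \<Longrightarrow> cube_norm 0 p f = f []"
  unfolding cube_norm_def by (simp add: cube_0 powr_powr)

lemma noise_form_0: "noise_form 0 \<sigma> f g = f [] * g []"
  unfolding noise_form_def joint_def noise_def by (simp add: cube_0)

lemma cube_norm_Suc:
  assumes "0 < p" "\<And>x. 0 \<le> f x"
  shows "cube_norm (Suc d) p f =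
    ((cube_norm d p (\<lambda>t. f (1 # t)) powr p + cube_norm d p (\<lambda>t. f ((-1) # t)) powr p) / 2) powr (1 / p)"
proof -
  have "cube_norm d p (\<lambda>t. f (h # t)) powr p = (\<Sum>t\<in>cube d. f (h # t) powr p) / 2 ^ d" for h
    unfolding cube_norm_def using assms by (simp add: powr_powr sum_nonneg)
  then show ?thesis
    unfolding cube_norm_def[of "Suc d"] sum_cube_Suc by (simp add: add_divide_distrib mult.commute)
qed

lemma noise_form_Suc:
  fixes d :: nat and \<sigma> :: real and f g :: "int list \<Rightarrow> real"
  defines "S \<equiv> \<lambda>h h'. noise_form d \<sigma> (\<lambda>t. f (h # t)) (\<lambda>t. g (h' # t))"
  shows "noise_form (Suc d) \<sigma> f g = ((1 + \<sigma>) * (S 1 1 + S (-1) (-1)) + (1 - \<sigma>) * (S 1 (-1) + S (-1) 1)) / 4"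
proof -
  have block: "(\<Sum>t\<in>cube d. \<Sum>t'\<in>cube d. f (h # t) * g (h' # t') * joint (Suc d) \<sigma> (h # t) (h' # t'))
      = (if h = h' then (1 + \<sigma>) / 4 else (1 - \<sigma>) / 4) * S h h'" for h h'
    unfolding S_def noise_form_def joint_Cons sum_distrib_left by (intro sum.cong refl) (simp add: mult_ac)
  have "noise_form (Suc d) \<sigma> f g =
      (\<Sum>t\<in>cube d. \<Sum>t'\<in>cube d. f (1 # t) * g (1 # t') * joint (Suc d) \<sigma> (1 # t) (1 # t')) +
      (\<Sum>t\<in>cube d. \<Sum>t'\<in>cube d. f (1 # t) * g ((-1) # t') * joint (Suc d) \<sigma> (1 # t) ((-1) # t')) +
     ((\<Sum>t\<in>cube d. \<Sum>t'\<in>cube d. f ((-1) # t) * g (1 # t') * joint (Suc d) \<sigma> ((-1) # t) (1 # t')) +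
      (\<Sum>t\<in>cube d. \<Sum>t'\<in>cube d. f ((-1) # t) * g ((-1) # t') * joint (Suc d) \<sigma> ((-1) # t) ((-1) # t')))"
    by (simp only: noise_form_def sum_cube_Suc sum.distrib)
  then show ?thesis unfolding block by (simp add: field_simps)
qed

lemma noise_form_le_cube_norms:
  fixes p q \<sigma> :: real and f g :: "int list \<Rightarrow> real"
  assumes "1 < p" "1 < q" "0 \<le> \<sigma>" "\<sigma>^2 = (p - 1) * (q - 1)" "\<sigma> < 1"
    and "\<And>x. 0 \<le> f x" "\<And>y. 0 \<le> g y"
  shows "noise_form d \<sigma> f g \<le> cube_norm d p f * cube_norm d q g"
  using assms(6,7)
proof (induction d arbitrary: f g)
  case 0
  then show ?case using assms by (simp add: noise_form_0 cube_norm_0)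
next
  case (Suc d)
  define F where "F h = cube_norm d p (\<lambda>t. f (h # t))" for h
  define G where "G h = cube_norm d q (\<lambda>t. g (h # t))" for h
  have F_G_nonneg: "0 \<le> F h" "0 \<le> G h" for h
    unfolding F_def G_def cube_norm_def by auto
  have "noise_form (Suc d) \<sigma> f g
      \<le> ((1 + \<sigma>) * (F 1 * G 1 + F (-1) * G (-1)) + (1 - \<sigma>) * (F 1 * G (-1) + F (-1) * G 1)) / 4"
    unfolding noise_form_Suc F_def G_def using Suc assms
    by (intro divide_right_mono add_mono mult_left_mono Suc.IH) auto
  also have "\<dots> \<le> ((F 1 powr p + F (-1) powr p) / 2) powr (1/p) * ((G 1 powr q + G (-1) powr q) / 2) powr (1/q)"
    using assms F_G_nonneg by (intro two_point_noise_bound) auto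
  also have "\<dots> = cube_norm (Suc d) p f * cube_norm (Suc d) q g"
    unfolding F_def G_def using Suc assms by (simp add: cube_norm_Suc)
  finally show ?case .
qed

section \<open>Robust expansion\<close>

lemma cube_norm_indicator:
  assumes "B \<subseteq> cube d" "0 < p"
  shows "cube_norm d p (indicator B) = mu d B powr (1 / p)"
proof -
  have "(\<Sum>x\<in>cube d. indicator B x powr p) = (\<Sum>x\<in>cube d. indicator B x :: real)"
    using assms by (intro sum.cong) (auto simp: indicator_def)
  also have "\<dots> = card B"
    using assms by (simp add: indicator_def sum.If_cases finite_cube Int_absorb1)
  finally show ?thesis unfolding cube_norm_def mu_def by simp
qed

lemma noise_form_indicator:
  assumes "A \<subseteq> cube d" "B \<subseteq> cube d" "0 < mu d A"
  shows "noise_form d \<sigma> (indicator B) (indicator A) = cond_prob d \<sigma> B A * mu d A"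
proof -
  have "{x \<in> cube d. x \<in> A} = A" "{x \<in> cube d. x \<in> B} = B"
    using assms by auto
  then have "noise_form d \<sigma> (indicator B) (indicator A) = (\<Sum>x\<in>B. \<Sum>y\<in>A. joint d \<sigma> x y)"
    unfolding noise_form_def by (simp add: mult.assoc finite_cube flip: sum_distrib_left)
  then show ?thesis
    unfolding cond_prob_def using assms by simp
qed

lemma cond_prob_hypercontractive:
  fixes p q \<sigma> :: real
  assumes "1 < p" "1 < q" "0 \<le> \<sigma>" "\<sigma>^2 = (p - 1) * (q - 1)" "\<sigma> < 1"
    and "A \<subseteq> cube d" "B \<subseteq> cube d" "0 < mu d A"
  shows "cond_prob d \<sigma> B A * mu d A \<le> mu d B powr (1 / q) * mu d A powr (1 / p)"
proof -
  have "noise_form d \<sigma> (indicator B) (indicator A) \<le> cube_norm d q (indicator B) * cube_norm d p (indicator A)"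
    using assms by (intro noise_form_le_cube_norms) (auto simp: mult.commute)
  then show ?thesis
    using assms by (simp add: noise_form_indicator cube_norm_indicator)
qed

lemma expansion_from_norm_bound:
  fixes a b \<gamma> m p q :: real
  assumes "1 < p" "1 < q" "(p - 1) * (q - 1) \<le> 1"
    and "0 < a" "a \<le> 1 / m" "0 \<le> b" "0 \<le> \<gamma>"
    and "\<gamma> * a \<le> b powr (1 / q) * a powr (1 / p)"
  shows "\<gamma> powr q * m powr (1 + q / p - q) \<le> b / a"
proof -
  define e where "e = q - q / p - 1"
  have "p * e = (p - 1) * (q - 1) - 1" unfolding e_def using assms by (simp add: field_simps)
  then have "e \<le> 0" using assms by (smt (verit) mult_pos_pos)
  have "(\<gamma> * a) powr q \<le> (b powr (1 / q) * a powr (1 / p)) powr q"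
    using assms by (intro powr_mono2) auto
  then have "\<gamma> powr q * a powr q \<le> b * a powr (q / p)"
    using assms by (simp add: powr_mult powr_powr)
  moreover have "a powr q = a powr e * a powr (q / p) * a powr 1"
    unfolding e_def powr_add[symmetric] by simp
  ultimately have "\<gamma> powr q * a powr e * a \<le> b"
    using assms by (simp add: mult_ac)
  then have bound: "\<gamma> powr q * a powr e \<le> b / a"
    using assms by (simp add: le_divide_eq)
  have "m powr (1 + q / p - q) = (1 / m) powr e"
    unfolding e_def using assms by (simp add: powr_divide powr_minus_divide[symmetric] powr_minus) (simp add: algebra_simps)
  then have "\<gamma> powr q * m powr (1 + q / p - q) = \<gamma> powr q * (1 / m) powr e" by simp
  also have "\<dots> \<le> \<gamma> powr q * a powr e"
    using powr_mono2'[OF \<open>e \<le> 0\<close>] assms by (intro mult_left_mono) auto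
  finally show ?thesis using bound by linarith
qed

theorem lemma6p2:
  fixes d :: nat and c p q \<gamma> m :: real
  assumes "c > 1"
    and "p \<ge> 1" and "q \<ge> 1"
    and "(p - 1) * (q - 1) = (1 - 1 / c) ^ 2"
    and "0 \<le> \<gamma>" and "\<gamma> \<le> 1"
    and "m \<ge> 1"
  shows "ereal (\<gamma> powr q * m powr (1 + q / p - q)) \<le> Phi_r d (1 - 1 / c) (1 / m) \<gamma>"
proof -
  define \<sigma> where "\<sigma> = 1 - 1 / c"
  have \<sigma>: "0 < \<sigma>" "\<sigma> < 1" unfolding \<sigma>_def using assms(1) by (auto simp: field_simps)
  have pq: "(p - 1) * (q - 1) = \<sigma>^2" using assms(4) unfolding \<sigma>_def .
  then have "0 < (p - 1) * (q - 1)" "(p - 1) * (q - 1) \<le> 1"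
    using \<sigma> by (auto simp: power_le_one)
  then have "1 < p" "1 < q" using assms(2,3) by (auto simp: zero_less_mult_iff)
  show ?thesis
    unfolding Phi_r_def \<sigma>_def[symmetric]
  proof (rule Inf_greatest, clarify)
    fix A B
    assume A: "A \<subseteq> cube d" "0 < mu d A" "mu d A \<le> 1 / m"
      and B: "B \<subseteq> cube d" "\<gamma> \<le> cond_prob d \<sigma> B A"
    have "\<gamma> * mu d A \<le> cond_prob d \<sigma> B A * mu d A"
      using A B by (simp add: mult_right_mono)
    also have "\<dots> \<le> mu d B powr (1 / q) * mu d A powr (1 / p)"
      using \<open>1 < p\<close> \<open>1 < q\<close> \<sigma> pq A B by (intro cond_prob_hypercontractive) auto
    finally have "\<gamma> powr q * m powr (1 + q / p - q) \<le> mu d B / mu d A"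
      using \<open>1 < p\<close> \<open>1 < q\<close> \<open>(p - 1) * (q - 1) \<le> 1\<close> A assms(5)
      by (intro expansion_from_norm_bound) (auto simp: mu_def)
    then show "ereal (\<gamma> powr q * m powr (1 + q / p - q)) \<le> ereal (mu d B / mu d A)"
      by simp
  qed
qed

end
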